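(* Let $b(t)$, $t\in[0,1]$, be a Brownian bridge, $F_0(t)=t$, and $T^2(G)=\int_0^1G^2(t)\,dt$. There is a constant $c>0$ such that for every distribution function $F$ on $[0,1]$, $$\mathbf{E}\,\big|T^2(b(F(t)))-T^2(b(t))\big|<c\,T^{1/4}(F-F_0).$$
   Context: $b(F(t))$ denotes the process $t\mapsto b(F(t))$; $T(G)=(T^2(G))^{1/2}$. *)

theory Defs
  imports "HOL-Probability.Probability"
begin

definition T2 :: "(real \<Rightarrow> real) \<Rightarrow> real" where
  "T2 G = (LBINT t=0..1. (G t)\<^sup>2)"

definition T :: "(real \<Rightarrow> real) \<Rightarrow> real" where
  "T G = sqrt (T2 G)"

definition bb_cov :: "real \<Rightarrow> real \<Rightarrow> real" where
  "bb_cov s t = min s t - s * t"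

text \<open>Joint Gaussianity is expressed
  through characteristic functions of all finite linear combinations
  (this also covers the degenerate times 0 and 1).\<close>
definition brownian_bridge :: "'a measure \<Rightarrow> (real \<Rightarrow> 'a \<Rightarrow> real) \<Rightarrow> bool" where
  "brownian_bridge M b \<longleftrightarrow>
     prob_space M \<and>
     (\<forall>t\<in>{0..1}. b t \<in> borel_measurable M) \<and>
     (\<forall>\<omega>\<in>space M. continuous_on {0..1} (\<lambda>t. b t \<omega>)) \<and>
     (\<forall>(n::nat) (ts::nat \<Rightarrow> real) (as::nat \<Rightarrow> real) (u::real).
        (\<forall>i<n. ts i \<in> {0..1}) \<longrightarrow>
        char (distr M borel (\<lambda>\<omega>. \<Sum>i<n. as i * b (ts i) \<omega>)) u
          = complex_of_real (exp (- (u\<^sup>2 / 2) * (\<Sum>i<n. \<Sum>j<n. as i * as j * bb_cov (ts i) (ts j)))))"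

end

theory Submission
  imports Defs
begin

(* Write h = F - id.  Pathwise, |T^2(b o F) - T^2(b)| is at most the integral over [0,1] of
   |b(F t)^2 - b(t)^2| = |b(F t) - b(t)| |b(F t) + b(t)|.  The bridge covariance gives
   E(b(s) - b(t))^2 <= |s - t| and E(b(s) + b(t))^2 <= 1, so by Cauchy-Schwarz the expectation
   of this integrand is at most |h t|^(1/2).  Path continuity makes (t, w) |-> b t w jointly
   measurable, so Tonelli bounds the left-hand side by the integral of |h|^(1/2) over [0,1].
   Two more applications of Cauchy-Schwarz on [0,1] bound this by (T^2 h)^(1/4) = (T h)^(1/2),
   which is at most (T h)^(1/4) since |h| <= 1; so c = 1 works. *)

lemma ennreal_le_root_if_power_le:
  assumes "0 < n" and "0 \<le> a" and "x ^ n \<le> ennreal a"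
  shows "x \<le> ennreal (root n a)"
proof -
  from assms have "x \<noteq> \<infinity>" by (auto simp: top_unique)
  then obtain r where r: "0 \<le> r" "x = ennreal r" by (cases x) auto
  with assms have "r ^ n \<le> a" by (simp add: ennreal_power)
  have "r = root n (r ^ n)" using r(1) \<open>0 < n\<close> by (simp add: real_root_power_cancel)
  also have "\<dots> \<le> root n a" using \<open>r ^ n \<le> a\<close> \<open>0 < n\<close> by simp
  finally show ?thesis using r by (simp add: ennreal_leI)
qed

lemma set_nn_integral_square_le:
  fixes f :: "'a \<Rightarrow> ennreal"
  assumes [measurable]: "f \<in> borel_measurable M" "A \<in> sets M"
  shows "(\<integral>\<^sup>+x\<in>A. f x \<partial>M)\<^sup>2 \<le> emeasure M A * (\<integral>\<^sup>+x\<in>A. (f x)\<^sup>2 \<partial>M)"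
proof -
  have "(\<integral>\<^sup>+x\<in>A. f x \<partial>M)\<^sup>2 = (\<integral>\<^sup>+x. (f x * indicator A x) * indicator A x \<partial>M)\<^sup>2"
    by (auto intro!: arg_cong[where f="\<lambda>x. x\<^sup>2"] nn_integral_cong split: split_indicator)
  also have "\<dots> \<le> (\<integral>\<^sup>+x. (f x * indicator A x)\<^sup>2 \<partial>M) * (\<integral>\<^sup>+x. (indicator A x)\<^sup>2 \<partial>M)"
    by (rule Cauchy_Schwarz_nn_integral) measurable
  also have "\<dots> = (\<integral>\<^sup>+x\<in>A. (f x)\<^sup>2 \<partial>M) * (\<integral>\<^sup>+x. indicator A x \<partial>M)"
    by (intro arg_cong2[where f=times] nn_integral_cong) (simp_all split: split_indicator)
  finally show ?thesis by (simp add: mult.commute)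
qed

lemma set_nn_integral_eq_set_integral:
  assumes "set_integrable M A f" and "\<And>x. x \<in> A \<Longrightarrow> 0 \<le> f x"
  shows "(\<integral>\<^sup>+x\<in>A. ennreal (f x) \<partial>M) = ennreal (LINT x:A|M. f x)"
proof -
  have "(\<integral>\<^sup>+x\<in>A. ennreal (f x) \<partial>M) = (\<integral>\<^sup>+x. ennreal (indicator A x *\<^sub>R f x) \<partial>M)"
    by (intro nn_integral_cong) (simp split: split_indicator)
  also have "\<dots> = ennreal (LINT x:A|M. f x)"
    using assms unfolding set_integrable_def set_lebesgue_integral_def
    by (intro nn_integral_eq_integral) (auto split: split_indicator)
  finally show ?thesis .
qed

lemma set_integrable_Icc_bounded:
  fixes f :: "real \<Rightarrow> real"
  assumes "f \<in> borel_measurable borel" and "\<And>t. t \<in> {a..b} \<Longrightarrow> \<bar>f t\<bar> \<le> B"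
  shows "set_integrable lborel {a..b} f"
  unfolding set_integrable_def
  using assms by (intro integrableI_bounded_set_indicator[where B=B]) (auto simp: emeasure_lborel_Icc_eq)

lemma LIMSEQ_floor_mult_divide: "(\<lambda>n. real_of_int \<lfloor>real (Suc n) * t\<rfloor> / real (Suc n)) \<longlonglongrightarrow> t"
proof (rule tendsto_sandwich[of "\<lambda>n. t - 1 / real (Suc n)" _ _ "\<lambda>n. t"])
  show "\<forall>\<^sub>F n in sequentially. t - 1 / real (Suc n) \<le> real_of_int \<lfloor>real (Suc n) * t\<rfloor> / real (Suc n)"
  proof (intro always_eventually allI)
    fix n
    have "real (Suc n) * t - 1 \<le> real_of_int \<lfloor>real (Suc n) * t\<rfloor>" by linarith
    then have "(real (Suc n) * t - 1) / real (Suc n) \<le> real_of_int \<lfloor>real (Suc n) * t\<rfloor> / real (Suc n)"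
      by (rule divide_right_mono) simp
    then show "t - 1 / real (Suc n) \<le> real_of_int \<lfloor>real (Suc n) * t\<rfloor> / real (Suc n)"
      by (simp add: diff_divide_distrib)
  qed
  show "\<forall>\<^sub>F n in sequentially. real_of_int \<lfloor>real (Suc n) * t\<rfloor> / real (Suc n) \<le> t"
    by (intro always_eventually allI) (simp add: pos_divide_le_eq mult.commute)
  show "(\<lambda>n. t - 1 / real (Suc n)) \<longlonglongrightarrow> t"
    using tendsto_diff[OF tendsto_const LIMSEQ_Suc[OF lim_const_over_n[of 1]]] by simp
qed simp

lemma borel_measurable_caratheodory:
  fixes f :: "real \<Rightarrow> 'a \<Rightarrow> real"
  assumes meas: "\<And>t. f t \<in> borel_measurable M"
    and cont: "\<And>\<omega>. \<omega> \<in> space M \<Longrightarrow> continuous_on UNIV (\<lambda>t. f t \<omega>)"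
  shows "(\<lambda>x. f (fst x) (snd x)) \<in> borel_measurable (lborel \<Otimes>\<^sub>M M)"
proof (rule borel_measurable_LIMSEQ_real)
  define u where "u n x = f (real_of_int \<lfloor>real (Suc n) * fst x\<rfloor> / real (Suc n)) (snd x)" for n x
  show "u n \<in> borel_measurable (lborel \<Otimes>\<^sub>M M)" for n
  proof -
    have "(\<lambda>x. f (real_of_int k / real (Suc n)) (snd x)) \<in> borel_measurable (lborel \<Otimes>\<^sub>M M)" for k :: int
      using meas by measurable
    moreover have "(\<lambda>x. \<lfloor>real (Suc n) * fst x\<rfloor>) \<in> (lborel \<Otimes>\<^sub>M M) \<rightarrow>\<^sub>M count_space UNIV"
      by measurable
    ultimately show ?thesis
      unfolding u_def by (rule measurable_compose_countable)
  qed
  fix x :: "real \<times> 'a" assume "x \<in> space (lborel \<Otimes>\<^sub>M M)"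
  then have "continuous_on UNIV (\<lambda>t. f t (snd x))" by (intro cont) (auto simp: space_pair_measure)
  then show "(\<lambda>n. u n x) \<longlonglongrightarrow> f (fst x) (snd x)"
    unfolding u_def by (rule continuous_on_tendsto_compose[OF _ LIMSEQ_floor_mult_divide]) auto
qed

lemma (in prob_space) nn_integral_square_gaussian:
  assumes [measurable]: "X \<in> borel_measurable M"
    and char_X: "\<And>u. char (distr M borel X) u = complex_of_real (exp (- (u\<^sup>2 / 2) * v))"
  shows "(\<integral>\<^sup>+\<omega>. ennreal ((X \<omega>)\<^sup>2) \<partial>M) = ennreal v"
proof -
  interpret X: real_distribution "distr M borel X"
    by (rule real_distribution_distr) simp
  have "exp (- v / 2) \<le> 1"
    using X.cmod_char_le_1[of 1] by (simp add: char_X)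
  then have v: "0 \<le> v" by simp
  define \<sigma> where "\<sigma> = sqrt v"
  let ?N = std_normal_distribution
  interpret N: real_distribution ?N by (rule real_dist_normal_dist)
  define D where "D = distr ?N borel (\<lambda>x. \<sigma> * x)"
  have "char D u = char ?N (\<sigma> * u)" for u
    unfolding D_def char_def by (subst integral_distr) (auto simp: mult_ac)
  also have "\<dots> u = complex_of_real (exp (- (u\<^sup>2 / 2) * v))" for u
    by (simp add: char_std_normal_distribution \<sigma>_def power_mult_distrib v)
  finally have "distr M borel X = D"
    using char_X by (intro Levy_uniqueness X.real_distribution_axioms)
      (auto simp: D_def)
  have "(\<integral>\<^sup>+\<omega>. ennreal ((X \<omega>)\<^sup>2) \<partial>M) = (\<integral>\<^sup>+x. ennreal (x\<^sup>2) \<partial>distr M borel X)"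
    by (simp add: nn_integral_distr)
  also have "\<dots> = (\<integral>\<^sup>+x. ennreal ((\<sigma> * x)\<^sup>2) \<partial>?N)"
    unfolding \<open>distr M borel X = D\<close> D_def by (simp add: nn_integral_distr)
  also have "\<dots> = ennreal (\<integral>x. (\<sigma> * x)\<^sup>2 \<partial>?N)"
    using integrable_std_normal_distribution_moment[of 2]
    by (intro nn_integral_eq_integral) (auto simp: power_mult_distrib)
  also have "\<dots> = ennreal v"
    using std_normal_distribution_even_moments(1)[of 1] by (simp add: power_mult_distrib \<sigma>_def v)
  finally show ?thesis .
qed

lemma brownian_bridge_nn_integral_square:
  assumes bb: "brownian_bridge M b" and s: "s \<in> {0..1}" and t: "t \<in> {0..1}"
  shows "(\<integral>\<^sup>+\<omega>. ennreal ((b s \<omega> + c * b t \<omega>)\<^sup>2) \<partial>M)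
    = ennreal (bb_cov s s + c\<^sup>2 * bb_cov t t + 2 * c * bb_cov s t)"
proof -
  interpret prob_space M using bb by (simp add: brownian_bridge_def)
  have [measurable]: "b s \<in> borel_measurable M" "b t \<in> borel_measurable M"
    using bb s t by (auto simp: brownian_bridge_def)
  define ts where "ts = (\<lambda>i::nat. if i = 0 then s else t)"
  define as where "as = (\<lambda>i::nat. if i = 0 then 1 else c)"
  have "(\<lambda>\<omega>. \<Sum>i<2. as i * b (ts i) \<omega>) = (\<lambda>\<omega>. b s \<omega> + c * b t \<omega>)"
    by (simp add: numeral_2_eq_2 as_def ts_def)
  moreover have "(\<Sum>i<2. \<Sum>j<2. as i * as j * bb_cov (ts i) (ts j))
      = bb_cov s s + c\<^sup>2 * bb_cov t t + 2 * c * bb_cov s t"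
    by (simp add: numeral_2_eq_2 as_def ts_def bb_cov_def power2_eq_square min.commute algebra_simps)
  moreover have "char (distr M borel (\<lambda>\<omega>. \<Sum>i<2. as i * b (ts i) \<omega>)) u
      = complex_of_real (exp (- (u\<^sup>2 / 2) * (\<Sum>i<2. \<Sum>j<2. as i * as j * bb_cov (ts i) (ts j))))" for u
  proof -
    have "\<forall>i<2. ts i \<in> {0..1}" using s t by (simp add: ts_def)
    then show ?thesis using bb unfolding brownian_bridge_def by blast
  qed
  ultimately show ?thesis
    by (intro nn_integral_square_gaussian) simp_all
qed

lemma brownian_bridge_nn_integral_abs_square_diff:
  assumes bb: "brownian_bridge M b" and s: "s \<in> {0..1}" and t: "t \<in> {0..1}"
  shows "(\<integral>\<^sup>+\<omega>. ennreal \<bar>(b s \<omega>)\<^sup>2 - (b t \<omega>)\<^sup>2\<bar> \<partial>M) \<le> ennreal (sqrt \<bar>s - t\<bar>)"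
proof -
  have [measurable]: "b s \<in> borel_measurable M" "b t \<in> borel_measurable M"
    using bb s t by (auto simp: brownian_bridge_def)
  have diff: "(\<integral>\<^sup>+\<omega>. ennreal ((b s \<omega> - b t \<omega>)\<^sup>2) \<partial>M) \<le> ennreal \<bar>s - t\<bar>"
  proof -
    have "bb_cov s s + (-1)\<^sup>2 * bb_cov t t + 2 * (-1) * bb_cov s t = \<bar>s - t\<bar> - (s - t)\<^sup>2"
      by (cases "s \<le> t") (auto simp: bb_cov_def min_def power2_eq_square algebra_simps)
    then show ?thesis
      using brownian_bridge_nn_integral_square[OF bb s t, of "-1"] by (auto intro!: ennreal_leI)
  qed
  have sum: "(\<integral>\<^sup>+\<omega>. ennreal ((b s \<omega> + b t \<omega>)\<^sup>2) \<partial>M) \<le> 1"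
  proof -
    have "bb_cov s s + bb_cov t t + 2 * bb_cov s t \<le> 1 - (s + t - 1)\<^sup>2"
      by (auto simp: bb_cov_def min_def power2_eq_square algebra_simps)
    also have "\<dots> \<le> 1" by simp
    finally show ?thesis
      using brownian_bridge_nn_integral_square[OF bb s t, of 1] by (auto intro!: ennreal_leI)
  qed
  have "(\<integral>\<^sup>+\<omega>. ennreal \<bar>(b s \<omega>)\<^sup>2 - (b t \<omega>)\<^sup>2\<bar> \<partial>M)\<^sup>2
      = (\<integral>\<^sup>+\<omega>. ennreal \<bar>b s \<omega> - b t \<omega>\<bar> * ennreal \<bar>b s \<omega> + b t \<omega>\<bar> \<partial>M)\<^sup>2"
    by (simp add: ennreal_mult[symmetric] abs_mult[symmetric] power2_eq_square algebra_simps)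
  also have "\<dots> \<le> (\<integral>\<^sup>+\<omega>. ennreal \<bar>b s \<omega> - b t \<omega>\<bar> ^ 2 \<partial>M) * (\<integral>\<^sup>+\<omega>. ennreal \<bar>b s \<omega> + b t \<omega>\<bar> ^ 2 \<partial>M)"
    by (rule Cauchy_Schwarz_nn_integral) measurable
  also have "\<dots> \<le> ennreal \<bar>s - t\<bar> * 1"
    using diff sum by (intro mult_mono) (simp_all add: ennreal_power)
  finally show ?thesis
    using ennreal_le_root_if_power_le[of 2] by (simp add: sqrt_def)
qed

lemma borel_measurable_brownian_bridge_clamp:
  assumes bb: "brownian_bridge M b" and [measurable]: "g \<in> borel_measurable borel"
  shows "(\<lambda>x. b (clamp 0 1 (g (fst x))) (snd x)) \<in> borel_measurable (lborel \<Otimes>\<^sub>M M)"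
proof -
  have "clamp 0 1 t \<in> {0..1::real}" for t
    using clamp_in_interval[of 0 1 t] by simp
  then have joint: "(\<lambda>x. b (clamp 0 1 (fst x)) (snd x)) \<in> borel_measurable (lborel \<Otimes>\<^sub>M M)"
    using bb unfolding brownian_bridge_def
    by (intro borel_measurable_caratheodory clamp_continuous_on) auto
  have "(\<lambda>x. (g (fst x), snd x)) \<in> lborel \<Otimes>\<^sub>M M \<rightarrow>\<^sub>M lborel \<Otimes>\<^sub>M M" by measurable
  from measurable_compose[OF this joint] show ?thesis by simp
qed

lemma T2_eq_set_integral: "T2 f = (LINT t:{0..1}|lborel. (f t)\<^sup>2)"
  unfolding T2_def using interval_integral_Icc[of 0 1 "\<lambda>t. (f t)\<^sup>2"]
  by (simp add: zero_ereal_def one_ereal_def)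

lemma T2_cong: "(\<And>t. t \<in> {0..1} \<Longrightarrow> f t = g t) \<Longrightarrow> T2 f = T2 g"
  unfolding T2_eq_set_integral by (intro set_lebesgue_integral_cong) auto

lemma abs_T2_diff_le:
  assumes f: "set_integrable lborel {0..1} (\<lambda>t. (f t)\<^sup>2)" and g: "set_integrable lborel {0..1} (\<lambda>t. (g t)\<^sup>2)"
  shows "ennreal \<bar>T2 f - T2 g\<bar> \<le> (\<integral>\<^sup>+t\<in>{0..1}. ennreal \<bar>(f t)\<^sup>2 - (g t)\<^sup>2\<bar> \<partial>lborel)"
proof -
  have fg: "set_integrable lborel {0..1} (\<lambda>t. (f t)\<^sup>2 - (g t)\<^sup>2)" using f g by simp
  have "\<bar>T2 f - T2 g\<bar> = \<bar>LINT t:{0..1}|lborel. (f t)\<^sup>2 - (g t)\<^sup>2\<bar>"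
    unfolding T2_eq_set_integral using f g by (simp add: set_integral_diff)
  also have "\<dots> \<le> (LINT t:{0..1}|lborel. \<bar>(f t)\<^sup>2 - (g t)\<^sup>2\<bar>)"
    using set_integral_norm_bound[OF fg] by simp
  finally show ?thesis
    using set_nn_integral_eq_set_integral[OF set_integrable_abs[OF fg]] by (simp add: ennreal_leI)
qed

lemma abs_T2_comp_diff_le:
  fixes p F :: "real \<Rightarrow> real"
  assumes p: "continuous_on {0..1} p" and [measurable]: "F \<in> borel_measurable borel"
    and F01: "\<And>t. F t \<in> {0..1}"
  shows "ennreal \<bar>T2 (\<lambda>t. p (F t)) - T2 p\<bar> \<le> (\<integral>\<^sup>+t\<in>{0..1}. ennreal \<bar>(p (F t))\<^sup>2 - (p t)\<^sup>2\<bar> \<partial>lborel)"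
proof -
  define q where "q t = p (clamp 0 1 t)" for t
  have q_eq: "q t = p t" if "t \<in> {0..1}" for t
    using that by (simp add: q_def)
  have q_F: "q (F t) = p (F t)" for t
    using q_eq F01 by blast
  have "bounded (range q)"
    unfolding q_def using p by (intro clamp_bounded compact_imp_bounded compact_continuous_image) auto
  then obtain K where K: "\<And>t. \<bar>q t\<bar> \<le> K" by (auto simp: bounded_iff)
  have "continuous_on UNIV q"
    unfolding q_def using p by (intro clamp_continuous_on) simp
  then have [measurable]: "q \<in> borel_measurable borel" by (rule borel_measurable_continuous_onI)
  have "\<bar>(q t)\<^sup>2\<bar> \<le> K\<^sup>2" for t
    using power_mono[OF K[of t] abs_ge_zero, of 2] by simp
  then have "set_integrable lborel {0..1} (\<lambda>t. (q (F t))\<^sup>2)" "set_integrable lborel {0..1} (\<lambda>t. (q t)\<^sup>2)"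
    by (auto intro!: set_integrable_Icc_bounded)
  moreover have "T2 q = T2 p" "T2 (\<lambda>t. q (F t)) = T2 (\<lambda>t. p (F t))"
    by (auto intro!: T2_cong simp: q_eq q_F)
  ultimately have "ennreal \<bar>T2 (\<lambda>t. p (F t)) - T2 p\<bar>
      \<le> (\<integral>\<^sup>+t\<in>{0..1}. ennreal \<bar>(q (F t))\<^sup>2 - (q t)\<^sup>2\<bar> \<partial>lborel)"
    using abs_T2_diff_le[of "\<lambda>t. q (F t)" q] by simp
  also have "\<dots> = (\<integral>\<^sup>+t\<in>{0..1}. ennreal \<bar>(p (F t))\<^sup>2 - (p t)\<^sup>2\<bar> \<partial>lborel)"
    by (intro nn_integral_cong) (simp add: q_eq q_F split: split_indicator)
  finally show ?thesis .
qed

lemma set_nn_integral_sqrt_abs_le: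
  fixes h :: "real \<Rightarrow> real"
  assumes [measurable]: "h \<in> borel_measurable borel"
  shows "(\<integral>\<^sup>+t\<in>{0..1}. ennreal (sqrt \<bar>h t\<bar>) \<partial>lborel) ^ 4 \<le> (\<integral>\<^sup>+t\<in>{0..1}. ennreal ((h t)\<^sup>2) \<partial>lborel)"
proof -
  have "(\<integral>\<^sup>+t\<in>{0..1}. ennreal (sqrt \<bar>h t\<bar>) \<partial>lborel) ^ 4
      = ((\<integral>\<^sup>+t\<in>{0..1}. ennreal (sqrt \<bar>h t\<bar>) \<partial>lborel)\<^sup>2)\<^sup>2"
    by (simp flip: power_mult)
  also have "\<dots> \<le> (\<integral>\<^sup>+t\<in>{0..1}. ennreal \<bar>h t\<bar> \<partial>lborel)\<^sup>2"
    using set_nn_integral_square_le[of "\<lambda>t. ennreal (sqrt \<bar>h t\<bar>)" lborel "{0..1}"]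
    by (intro power_mono) (simp_all add: ennreal_power)
  also have "\<dots> \<le> (\<integral>\<^sup>+t\<in>{0..1}. ennreal ((h t)\<^sup>2) \<partial>lborel)"
    using set_nn_integral_square_le[of "\<lambda>t. ennreal \<bar>h t\<bar>" lborel "{0..1}"]
    by (simp add: ennreal_power)
  finally show ?thesis .
qed

lemma set_nn_integral_sqrt_abs_le_T_powr:
  fixes h :: "real \<Rightarrow> real"
  assumes [measurable]: "h \<in> borel_measurable borel" and h_bounded: "\<And>t. t \<in> {0..1} \<Longrightarrow> \<bar>h t\<bar> \<le> 1"
  shows "(\<integral>\<^sup>+t\<in>{0..1}. ennreal (sqrt \<bar>h t\<bar>) \<partial>lborel) \<le> ennreal (T h powr (1/4))"
proof -
  have h2: "set_integrable lborel {0..1} (\<lambda>t. (h t)\<^sup>2)"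
    using h_bounded by (intro set_integrable_Icc_bounded[where B=1]) (auto simp: abs_square_le_1)
  have T2_h: "ennreal (T2 h) = (\<integral>\<^sup>+t\<in>{0..1}. ennreal ((h t)\<^sup>2) \<partial>lborel)"
    unfolding T2_eq_set_integral by (rule set_nn_integral_eq_set_integral[OF h2, symmetric]) simp
  have "0 \<le> T2 h" by (simp add: T2_eq_set_integral set_lebesgue_integral_def)
  moreover have "T2 h \<le> 1"
  proof -
    have "ennreal (T2 h) \<le> (\<integral>\<^sup>+t\<in>{0..1::real}. 1 \<partial>lborel)"
      unfolding T2_h using h_bounded
      by (intro nn_integral_mono) (auto simp: abs_square_le_1 split: split_indicator)
    then show ?thesis by (simp add: ennreal_le_iff2)
  qed
  ultimately have "root 4 (T2 h) \<le> T h powr (1/4)"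
  proof (cases "T2 h = 0")
    case False
    have "T2 h \<le> sqrt (T2 h)"
      using \<open>0 \<le> T2 h\<close> \<open>T2 h \<le> 1\<close>
      by (intro real_le_rsqrt) (simp add: power2_eq_square mult_left_le_one_le)
    then show ?thesis
      using False \<open>0 \<le> T2 h\<close> by (simp add: T_def root_powr_inverse powr_mono2)
  qed (simp add: T_def)
  moreover have "(\<integral>\<^sup>+t\<in>{0..1}. ennreal (sqrt \<bar>h t\<bar>) \<partial>lborel) \<le> ennreal (root 4 (T2 h))"
    using set_nn_integral_sqrt_abs_le[of h] \<open>0 \<le> T2 h\<close>
    by (intro ennreal_le_root_if_power_le) (simp_all add: T2_h)
  ultimately show ?thesis by (auto intro: order_trans ennreal_leI)
qed

lemma brownian_bridge_time_change_nn_integral: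
  assumes bb: "brownian_bridge M b" and [measurable]: "F \<in> borel_measurable borel"
    and F01: "\<And>t. F t \<in> {0..1}"
  shows "(\<integral>\<^sup>+\<omega>. ennreal \<bar>T2 (\<lambda>t. b (F t) \<omega>) - T2 (\<lambda>t. b t \<omega>)\<bar> \<partial>M)
    \<le> (\<integral>\<^sup>+t\<in>{0..1}. ennreal (sqrt \<bar>F t - t\<bar>) \<partial>lborel)"
proof -
  interpret prob_space M using bb by (simp add: brownian_bridge_def)
  define G where "G t \<omega> = ennreal \<bar>(b (F t) \<omega>)\<^sup>2 - (b t \<omega>)\<^sup>2\<bar> * indicator {0..1} t" for t \<omega>
  have [measurable]: "(\<lambda>x. b (clamp 0 1 (F (fst x))) (snd x)) \<in> borel_measurable (lborel \<Otimes>\<^sub>M M)"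
    by (rule borel_measurable_brownian_bridge_clamp[OF bb]) measurable
  have [measurable]: "(\<lambda>x. b (clamp 0 1 (id (fst x))) (snd x)) \<in> borel_measurable (lborel \<Otimes>\<^sub>M M)"
    by (rule borel_measurable_brownian_bridge_clamp[OF bb]) measurable
  \<comment> \<open>b t is only specified for t in [0,1]; the clamped process is jointly measurable.\<close>
  have "case_prod G = (\<lambda>x. ennreal \<bar>(b (clamp 0 1 (F (fst x))) (snd x))\<^sup>2 - (b (clamp 0 1 (id (fst x))) (snd x))\<^sup>2\<bar>
      * indicator {0..1} (fst x))"
    using F01 by (auto simp: fun_eq_iff G_def split: split_indicator)
  also have "\<dots> \<in> borel_measurable (lborel \<Otimes>\<^sub>M M)" by measurable
  moreover have "pair_sigma_finite lborel M"
    by (simp add: pair_sigma_finite_def sigma_finite_lborel prob_space_imp_sigma_finite prob_space_axioms)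
  ultimately have Fubini: "(\<integral>\<^sup>+\<omega>. (\<integral>\<^sup>+t. G t \<omega> \<partial>lborel) \<partial>M) = (\<integral>\<^sup>+t. (\<integral>\<^sup>+\<omega>. G t \<omega> \<partial>M) \<partial>lborel)"
    by (intro pair_sigma_finite.Fubini') simp_all
  have cont: "continuous_on {0..1} (\<lambda>t. b t \<omega>)" if "\<omega> \<in> space M" for \<omega>
    using bb that by (simp add: brownian_bridge_def)
  have "ennreal \<bar>T2 (\<lambda>t. b (F t) \<omega>) - T2 (\<lambda>t. b t \<omega>)\<bar> \<le> (\<integral>\<^sup>+t. G t \<omega> \<partial>lborel)"
    if "\<omega> \<in> space M" for \<omega>
    using abs_T2_comp_diff_le[OF cont[OF that] \<open>F \<in> borel_measurable borel\<close> F01] by (simp add: G_def)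
  then have "(\<integral>\<^sup>+\<omega>. ennreal \<bar>T2 (\<lambda>t. b (F t) \<omega>) - T2 (\<lambda>t. b t \<omega>)\<bar> \<partial>M) \<le> (\<integral>\<^sup>+\<omega>. (\<integral>\<^sup>+t. G t \<omega> \<partial>lborel) \<partial>M)"
    by (rule nn_integral_mono)
  also have "\<dots> \<le> (\<integral>\<^sup>+t\<in>{0..1}. ennreal (sqrt \<bar>F t - t\<bar>) \<partial>lborel)"
    unfolding Fubini
  proof (intro nn_integral_mono)
    fix t :: real
    show "(\<integral>\<^sup>+\<omega>. G t \<omega> \<partial>M) \<le> ennreal (sqrt \<bar>F t - t\<bar>) * indicator {0..1} t"
      using brownian_bridge_nn_integral_abs_square_diff[OF bb F01, of t]
      by (cases "t \<in> {0..1}") (simp_all add: G_def)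
  qed
  finally show ?thesis .
qed

lemma brownian_bridge_time_change:
  assumes bb: "brownian_bridge M b" and [measurable]: "F \<in> borel_measurable borel"
    and F01: "\<And>t. F t \<in> {0..1}"
  shows "(\<integral>\<omega>. \<bar>T2 (\<lambda>t. b (F t) \<omega>) - T2 (\<lambda>t. b t \<omega>)\<bar> \<partial>M) \<le> T (\<lambda>t. F t - t) powr (1/4)"
proof (rule integral_real_bounded)
  have "\<bar>F t - t\<bar> \<le> 1" if "t \<in> {0..1}" for t
    using F01[of t] that by auto
  then have "(\<integral>\<^sup>+t\<in>{0..1}. ennreal (sqrt \<bar>F t - t\<bar>) \<partial>lborel) \<le> ennreal (T (\<lambda>t. F t - t) powr (1/4))"
    by (intro set_nn_integral_sqrt_abs_le_T_powr) simp_all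
  with brownian_bridge_time_change_nn_integral[OF assms]
  show "(\<integral>\<^sup>+\<omega>. ennreal \<bar>T2 (\<lambda>t. b (F t) \<omega>) - T2 (\<lambda>t. b t \<omega>)\<bar> \<partial>M) \<le> ennreal (T (\<lambda>t. F t - t) powr (1/4))"
    by (rule order_trans)
qed simp

theorem lemma11:
  fixes M :: "'a measure" and b :: "real \<Rightarrow> 'a \<Rightarrow> real"
  assumes "brownian_bridge M b"
  shows "\<exists>c>0. \<forall>\<mu> :: real measure.
           real_distribution \<mu> \<and> measure \<mu> {0..1} = 1 \<longrightarrow>
           (let F = cdf \<mu> in
             (\<integral>\<omega>. \<bar>T2 (\<lambda>t. b (F t) \<omega>) - T2 (\<lambda>t. b t \<omega>)\<bar> \<partial>M)
               \<le> c * (T (\<lambda>t. F t - t)) powr (1/4))"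
proof (intro exI[of _ 1] conjI allI impI)
  fix \<mu> :: "real measure"
  assume "real_distribution \<mu> \<and> measure \<mu> {0..1} = 1"
  then interpret real_distribution \<mu> by simp
  have "cdf \<mu> \<in> borel_measurable borel"
    by (intro borel_measurable_mono) (simp add: mono_def cdf_nondecreasing)
  moreover have "cdf \<mu> t \<in> {0..1}" for t
    by (simp add: cdf_nonneg cdf_bounded_prob)
  ultimately show "let F = cdf \<mu> in
      (\<integral>\<omega>. \<bar>T2 (\<lambda>t. b (F t) \<omega>) - T2 (\<lambda>t. b t \<omega>)\<bar> \<partial>M) \<le> 1 * T (\<lambda>t. F t - t) powr (1/4)"
    using brownian_bridge_time_change[OF assms] by simp
qed simp

end
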